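(* Let $X\in\sigma\mathcal F$ with $\mathsf{rk}(X)\ge n$, where $n\in\omega$. Then every $A\in\mathcal F$ with $|A|\le n$ embeds into $X$.
   Context: Let $\mathcal L$ be a countable relational language without constants and $\mathcal F$ a hereditary, isomorphism-closed class of finite $\mathcal L$-structures. $\sigma\mathcal F$ is the class of countable structures isomorphic to unions of chains in $\mathcal F$; $\mathsf{age}(X)$ is the set of finite (induced) substructures of $X$. For $A\le B$, $B$ is a prime extension of $A$ if $|B\setminus A|=1$; a realization of $B$ in $X$ (where $A\le X$) is $C\le X$ with $A\le C$ and an isomorphism $B\to C$ fixing $A$ pointwise. For $F\in\mathsf{age}(X)$ define by recursion: $\mathsf{rk}_X(F)\ge0$ always; $\mathsf{rk}_X(F)\ge\alpha+1$ iff every prime extension $B\in\mathcal F$ of $F$ has a realization $C$ in $X$ with $\mathsf{rk}_X(C)\ge\alpha$; for limit $\alpha$, $\mathsf{rk}_X(F)\ge\alpha$ iff $\mathsf{rk}_X(F)\ge\beta$ for all $\beta<\alpha$. $\mathsf{rk}_X(F)=\sup\{\alpha:\mathsf{rk}_X(F)\ge\alpha\}$ (or $\infty$), and $\mathsf{rk}(X)=\mathsf{rk}_X(\emptyset)$. *)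

theory Defs
  imports Main "HOL-Library.Countable" "HOL-Library.Countable_Set"
begin

text \<open>A relation is interpreted as a set of tuples (lists of the right length).\<close>

record ('a, 'r) lstruct =
  univ :: "'a set"
  rels :: "'r \<Rightarrow> 'a list set"

definition wf_struct :: "('r \<Rightarrow> nat) \<Rightarrow> ('a, 'r) lstruct \<Rightarrow> bool" where
  "wf_struct ar S \<longleftrightarrow>
     (\<forall>r. \<forall>xs \<in> rels S r. length xs = ar r \<and> set xs \<subseteq> univ S)"

definition induced :: "('a, 'r) lstruct \<Rightarrow> 'a set \<Rightarrow> ('a, 'r) lstruct" where
  "induced S U = \<lparr> univ = U, rels = (\<lambda>r. {xs \<in> rels S r. set xs \<subseteq> U}) \<rparr>"

definition substr :: "('a, 'r) lstruct \<Rightarrow> ('a, 'r) lstruct \<Rightarrow> bool" where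
  "substr A B \<longleftrightarrow> univ A \<subseteq> univ B \<and>
     (\<forall>r. rels A r = {xs \<in> rels B r. set xs \<subseteq> univ A})"

definition iso :: "('a \<Rightarrow> 'a) \<Rightarrow> ('a, 'r) lstruct \<Rightarrow> ('a, 'r) lstruct \<Rightarrow> bool" where
  "iso f A B \<longleftrightarrow> bij_betw f (univ A) (univ B) \<and>
     (\<forall>r xs. set xs \<subseteq> univ A \<longrightarrow> (xs \<in> rels A r \<longleftrightarrow> map f xs \<in> rels B r))"

definition good_class :: "('r \<Rightarrow> nat) \<Rightarrow> ('a, 'r) lstruct set \<Rightarrow> bool" where
  "good_class ar \<F> \<longleftrightarrow>
     (\<forall>S \<in> \<F>. wf_struct ar S \<and> finite (univ S)) \<and>
     (\<forall>S \<in> \<F>. \<forall>T. substr T S \<longrightarrow> T \<in> \<F>) \<and>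
     (\<forall>S \<in> \<F>. \<forall>T f. wf_struct ar T \<and> iso f S T \<longrightarrow> T \<in> \<F>)"

definition union_struct :: "('a, 'r) lstruct set \<Rightarrow> ('a, 'r) lstruct" where
  "union_struct C = \<lparr> univ = (\<Union>S\<in>C. univ S), rels = (\<lambda>r. \<Union>S\<in>C. rels S r) \<rparr>"

definition sigma_class :: "('r \<Rightarrow> nat) \<Rightarrow> ('a, 'r) lstruct set \<Rightarrow> ('a, 'r) lstruct set" where
  "sigma_class ar \<F> = {X. wf_struct ar X \<and> countable (univ X) \<and>
     (\<exists>C. C \<subseteq> \<F> \<and> (\<forall>A\<in>C. \<forall>B\<in>C. substr A B \<or> substr B A) \<and>
          (\<exists>f. iso f (union_struct C) X))}"

definition age :: "('a, 'r) lstruct \<Rightarrow> ('a, 'r) lstruct set" where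
  "age X = {F. substr F X \<and> finite (univ F)}"

definition prime_ext :: "('a, 'r) lstruct \<Rightarrow> ('a, 'r) lstruct \<Rightarrow> bool" where
  "prime_ext A B \<longleftrightarrow> substr A B \<and> card (univ B - univ A) = 1"

definition realization :: "('a, 'r) lstruct \<Rightarrow> ('a, 'r) lstruct \<Rightarrow> ('a, 'r) lstruct
    \<Rightarrow> ('a, 'r) lstruct \<Rightarrow> bool" where
  "realization X A B C \<longleftrightarrow> substr C X \<and> substr A C \<and>
     (\<exists>f. iso f B C \<and> (\<forall>a\<in>univ A. f a = a))"

text \<open>rank_ge F X A n  means  rk_X(A) \<ge> n, for finite n (the finite stages of the
  ordinal recursion; limit stages are not needed for finite n).\<close>
primrec rank_ge :: "('a, 'r) lstruct set \<Rightarrow> ('a, 'r) lstruct \<Rightarrow> ('a, 'r) lstruct \<Rightarrow> nat \<Rightarrow> bool" where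
  "rank_ge \<F> X A 0 = True"
| "rank_ge \<F> X A (Suc n) =
     (\<forall>B \<in> \<F>. prime_ext A B \<longrightarrow> (\<exists>C. realization X A B C \<and> rank_ge \<F> X C n))"

definition struct_rank_ge :: "('a, 'r) lstruct set \<Rightarrow> ('a, 'r) lstruct \<Rightarrow> nat \<Rightarrow> bool" where
  "struct_rank_ge \<F> X n = rank_ge \<F> X (induced X {}) n"

definition embeds :: "('a, 'r) lstruct \<Rightarrow> ('a, 'r) lstruct \<Rightarrow> bool" where
  "embeds A X \<longleftrightarrow> (\<exists>C f. substr C X \<and> iso f A C)"

end

theory Submission
  imports Defs
begin

text \<open>The embedding of A is built one point at a time. Suppose g is an isomorphism
  from the restriction of A to D onto some C \<le> X with rank at least m. For a point
  a of A outside D, push the restriction of A to D \<union> {a} forward along g extended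
  by a fresh element b (available because the universe type is infinite). The
  result lies in \<F> and is a prime extension of C, so the rank of C provides a
  realization C' \<le> X of it with rank at least m - 1, and g extends to an
  isomorphism from the restriction of A to D \<union> {a} onto C'. Since all arities are
  positive, the empty restrictions of A and X are isomorphic, which starts the
  induction with rank n \<ge> |A|. Membership of X in \<sigma>\<F> is only needed for the
  well-formedness of X.\<close>

lemma good_class_wf_struct: "good_class ar \<F> \<Longrightarrow> S \<in> \<F> \<Longrightarrow> wf_struct ar S"
  and good_class_finite: "good_class ar \<F> \<Longrightarrow> S \<in> \<F> \<Longrightarrow> finite (univ S)"
  and good_class_substr: "good_class ar \<F> \<Longrightarrow> S \<in> \<F> \<Longrightarrow> substr T S \<Longrightarrow> T \<in> \<F>"
  and good_class_iso:
    "good_class ar \<F> \<Longrightarrow> S \<in> \<F> \<Longrightarrow> iso f S T \<Longrightarrow> wf_struct ar T \<Longrightarrow> T \<in> \<F>"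
  unfolding good_class_def by blast+

lemma wf_struct_substr: "wf_struct ar X \<Longrightarrow> substr C X \<Longrightarrow> wf_struct ar C"
  by (auto simp: substr_def wf_struct_def)

lemma substr_induced: "U \<subseteq> univ S \<Longrightarrow> substr (induced S U) S"
  by (auto simp: substr_def induced_def)

lemma wf_struct_induced: "wf_struct ar S \<Longrightarrow> wf_struct ar (induced S U)"
  by (auto simp: induced_def wf_struct_def)

lemma univ_induced [simp]: "univ (induced S U) = U"
  by (simp add: induced_def)

lemma induced_induced: "U \<subseteq> V \<Longrightarrow> induced (induced S V) U = induced S U"
  by (auto simp: induced_def)

lemma induced_univ: "wf_struct ar S \<Longrightarrow> induced S (univ S) = S"
  by (rule lstruct.equality) (auto simp: induced_def wf_struct_def)

lemma rels_induced_empty: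
  "\<forall>r. 0 < ar r \<Longrightarrow> wf_struct ar S \<Longrightarrow> rels (induced S {}) r = {}"
  unfolding induced_def wf_struct_def by (auto, metis less_irrefl list.size(3))

lemma iso_comp: "iso h S T \<Longrightarrow> iso f T U \<Longrightarrow> iso (f \<circ> h) S U"
  unfolding iso_def
  by (metis (no_types, lifting) bij_betw_imp_surj_on bij_betw_trans image_mono
      list.set_map map_map)

definition image_struct :: "('a \<Rightarrow> 'a) \<Rightarrow> ('a, 'r) lstruct \<Rightarrow> ('a, 'r) lstruct" where
  "image_struct h S = \<lparr>univ = h ` univ S, rels = (\<lambda>r. map h ` rels S r)\<rparr>"

lemma univ_image_struct [simp]: "univ (image_struct h S) = h ` univ S"
  by (simp add: image_struct_def)

lemma wf_struct_image_struct: "wf_struct ar S \<Longrightarrow> wf_struct ar (image_struct h S)"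
  by (auto simp: image_struct_def wf_struct_def)

lemma map_mem_image_iff:
  assumes "inj_on h A" "set xs \<subseteq> A" "\<forall>ys\<in>R. set ys \<subseteq> A"
  shows "map h xs \<in> map h ` R \<longleftrightarrow> xs \<in> R"
proof
  assume "map h xs \<in> map h ` R"
  then obtain ys where "ys \<in> R" "map h xs = map h ys" by auto
  moreover have "inj_on h (set xs \<union> set ys)"
    using assms \<open>ys \<in> R\<close> by (blast intro: inj_on_subset)
  ultimately show "xs \<in> R" using inj_on_map_eq_map by metis
qed simp

lemma iso_image_struct:
  assumes "inj_on h (univ S)" "wf_struct ar S"
  shows "iso h S (image_struct h S)"
  using assms map_mem_image_iff[OF assms(1)]
  by (auto simp: iso_def image_struct_def bij_betw_def wf_struct_def)

lemma iso_imp_eq_image_struct: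
  assumes "iso g S T" "wf_struct ar S" "wf_struct ar T"
  shows "T = image_struct g S"
proof -
  have bij: "bij_betw g (univ S) (univ T)" and
    rel: "\<And>r xs. set xs \<subseteq> univ S \<Longrightarrow> xs \<in> rels S r \<longleftrightarrow> map g xs \<in> rels T r"
    using assms(1) by (auto simp: iso_def)
  have "rels T r = map g ` rels S r" for r
  proof
    have "rels T r \<subseteq> lists (g ` univ S)"
      using assms(3) bij by (auto simp: wf_struct_def bij_betw_def)
    then show "rels T r \<subseteq> map g ` rels S r"
      using rel by (fastforce simp: lists_image)
    show "map g ` rels S r \<subseteq> rels T r"
      using rel assms(2) unfolding wf_struct_def by blast
  qed
  with bij show ?thesis
    by (intro lstruct.equality) (auto simp: image_struct_def bij_betw_def)
qed

lemma image_struct_cong: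
  assumes "\<forall>x\<in>univ S. g x = h x" "wf_struct ar S"
  shows "image_struct g S = image_struct h S"
proof -
  have "map g xs = map h xs" if "xs \<in> rels S r" for xs r
    using that assms by (auto simp: wf_struct_def intro!: map_cong)
  with assms(1) show ?thesis
    unfolding image_struct_def by (auto intro!: image_cong)
qed

lemma image_struct_induced:
  assumes "inj_on h (univ S)" "wf_struct ar S" "U \<subseteq> univ S"
  shows "image_struct h (induced S U) = induced (image_struct h S) (h ` U)"
proof -
  have "set (map h xs) \<subseteq> h ` U \<longleftrightarrow> set xs \<subseteq> U" if "set xs \<subseteq> univ S" for xs
    using that assms(1,3) unfolding inj_on_def by auto blast
  with assms(2) show ?thesis
    by (fastforce simp: image_struct_def induced_def wf_struct_def)
qed

lemma prime_ext_from_partial_iso: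
  fixes A C :: "('a, 'r) lstruct"
  assumes inf: "infinite (UNIV :: 'a set)"
    and good: "good_class ar \<F>" and AF: "A \<in> \<F>"
    and g: "iso g (induced A D) C" and wfC: "wf_struct ar C"
    and a: "a \<in> univ A" "a \<notin> D" and D: "D \<subseteq> univ A"
  obtains B h where "B \<in> \<F>" "prime_ext C B" "iso h (induced A (insert a D)) B"
proof -
  have wfA: "wf_struct ar A" and finA: "finite (univ A)"
    using good AF by (simp_all add: good_class_wf_struct good_class_finite)
  have bij: "bij_betw g D (univ C)"
    using g by (simp add: iso_def)
  then have "finite (univ C)"
    using D finA bij_betw_finite finite_subset by blast
  then obtain b :: 'a where b: "b \<notin> univ C"
    using inf ex_new_if_finite by blast
  define h where "h = g(a := b)"
  define S where "S = induced A (insert a D)"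
  define B where "B = image_struct h S"
  have wfS: "wf_struct ar S"
    by (simp add: S_def wf_struct_induced wfA)
  have hD: "h ` D = univ C"
    using bij a(2) unfolding h_def bij_betw_def by (metis fun_upd_image)
  have "inj_on h D"
    using bij a(2) unfolding h_def bij_betw_def inj_on_def by auto
  then have inj: "inj_on h (univ S)"
    using hD b by (auto simp: S_def h_def)
  have iso: "iso h S B"
    unfolding B_def using inj wfS by (rule iso_image_struct)
  have "S \<in> \<F>"
    using good AF substr_induced[of "insert a D" A] D a(1)
    by (simp add: S_def good_class_substr)
  then have "B \<in> \<F>"
    using good iso wf_struct_image_struct[OF wfS] by (simp add: B_def good_class_iso)
  moreover have "prime_ext C B"
  proof -
    have "C = image_struct g (induced A D)"
      using g wf_struct_induced[OF wfA] wfC by (rule iso_imp_eq_image_struct)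
    also have "\<dots> = image_struct h (induced A D)"
      using a(2) wf_struct_induced[OF wfA] by (intro image_struct_cong) (auto simp: h_def)
    also have "\<dots> = image_struct h (induced S D)"
      by (simp add: S_def induced_induced subset_insertI)
    also have "\<dots> = induced B (univ C)"
      unfolding B_def hD[symmetric] using inj wfS by (rule image_struct_induced) (auto simp: S_def)
    finally have C_eq: "C = induced B (univ C)" .
    have "univ C \<subseteq> univ B"
      using hD by (auto simp: B_def S_def)
    with C_eq have "substr C B"
      by (metis substr_induced)
    moreover have "univ B - univ C = {b}"
      using b hD by (auto simp: B_def S_def h_def)
    ultimately show ?thesis
      by (simp add: prime_ext_def)
  qed
  ultimately show ?thesis
    using that iso by (simp add: S_def)
qed

lemma embeds_if_iso_induced_univ:
  "wf_struct ar A \<Longrightarrow> iso g (induced A (univ A)) C \<Longrightarrow> substr C X \<Longrightarrow> embeds A X"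
  using induced_univ unfolding embeds_def by metis

lemma embeds_if_partial_iso_rank_ge:
  fixes A X :: "('a, 'r) lstruct"
  assumes inf: "infinite (UNIV :: 'a set)"
    and good: "good_class ar \<F>" and AF: "A \<in> \<F>" and wfX: "wf_struct ar X"
    and "D \<subseteq> univ A" "iso g (induced A D) C" "substr C X" "rank_ge \<F> X C m"
    and "card (univ A - D) \<le> m"
  shows "embeds A X"
proof -
  have wfA: "wf_struct ar A" and finA: "finite (univ A)"
    using good AF by (simp_all add: good_class_wf_struct good_class_finite)
  show ?thesis
    using assms(5-)
  proof (induction m arbitrary: D C g)
    case 0
    then have "D = univ A"
      using finA by (simp add: Diff_eq_empty_iff)
    with 0 show ?case
      using embeds_if_iso_induced_univ[OF wfA] by blast
  next
    case (Suc m)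
    show ?case
    proof (cases "D = univ A")
      case True
      with Suc.prems show ?thesis
        using embeds_if_iso_induced_univ[OF wfA] by blast
    next
      case False
      then obtain a where a: "a \<in> univ A" "a \<notin> D"
        using Suc.prems(1) by auto
      obtain B h where "B \<in> \<F>" "prime_ext C B" and h: "iso h (induced A (insert a D)) B"
        using prime_ext_from_partial_iso[OF inf good AF Suc.prems(2)
            wf_struct_substr[OF wfX Suc.prems(3)] a Suc.prems(1)] .
      then obtain C' f where C': "substr C' X" "rank_ge \<F> X C' m" and f: "iso f B C'"
        using Suc.prems(4) unfolding rank_ge.simps realization_def by blast
      have "card (univ A - insert a D) < card (univ A - D)"
        using a finA by (intro psubset_card_mono) auto
      with Suc.prems(5) have "card (univ A - insert a D) \<le> m"
        by simp
      moreover have "insert a D \<subseteq> univ A"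
        using a Suc.prems(1) by simp
      ultimately show ?thesis
        using Suc.IH[OF _ iso_comp[OF h f] C'] by blast
    qed
  qed
qed

theorem proposition3p1:
  fixes ar :: "'r::countable \<Rightarrow> nat"
    and \<F> :: "('a, 'r) lstruct set"
    and X A :: "('a, 'r) lstruct"
    and n :: nat
  assumes "infinite (UNIV :: 'a set)"
    and "\<forall>r. 0 < ar r"
    and "good_class ar \<F>"
    and "X \<in> sigma_class ar \<F>"
    and "struct_rank_ge \<F> X n"
    and "A \<in> \<F>"
    and "card (univ A) \<le> n"
  shows "embeds A X"
proof -
  have wfX: "wf_struct ar X"
    using assms(4) by (simp add: sigma_class_def)
  have wfA: "wf_struct ar A"
    using assms(3,6) by (rule good_class_wf_struct)
  have "iso id (induced A {}) (induced X {})"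
    using rels_induced_empty[OF assms(2) wfA] rels_induced_empty[OF assms(2) wfX]
    by (simp add: iso_def)
  moreover have "substr (induced X {}) X"
    by (simp add: substr_induced)
  ultimately show ?thesis
    using embeds_if_partial_iso_rank_ge[OF assms(1,3,6) wfX, of "{}"] assms(5,7)
    by (simp add: struct_rank_ge_def)
qed

end
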